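(* Let $k\ge 3$, $\varepsilon\in[0,\tfrac12)$, and let $b^t=(b^t_0,\dots,b^t_{k-1})$ be the counterclockwise vertices of a convex polygon (consecutive collinear vertices allowed) with $\|b^t_j-b^t_{j+1}\|\le 1$ for all $j$ (indices mod $k$). Define $b^{t+1}=\Phi_\varepsilon(b^t)$ and $b^{t+2}=\Phi_\varepsilon(b^{t+1})$. Then for every $j$, every point $p$ lying in the quadrilateral with corners $b^t_j,b^t_{j+1},b^{t+1}_{j+1},b^{t+1}_j$ or in the quadrilateral with corners $b^{t+1}_j,b^{t+1}_{j+1},b^{t+2}_{j+1},b^{t+2}_j$ satisfies $\|p-b^t_j\|\le 1+\frac{\varepsilon^2}{2}$ and $\|p-b^t_{j+1}\|\le 1+\frac{\varepsilon^2}{2}$.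
   Context: The $\varepsilon$-GtM step is the map $\Phi_\varepsilon\colon(\mathbb{R}^2)^k\to(\mathbb{R}^2)^k$, $(b_0,\dots,b_{k-1})\mapsto(b_0^+,\dots,b_{k-1}^+)$ with $b_j^+=\varepsilon\frac{b_{j-1}+b_{j+1}}{2}+(1-\varepsilon)b_j$, indices modulo $k$. $\|\cdot\|$ is the Euclidean norm. "Lying in a quadrilateral" means lying in the closed region it bounds (in particular in the convex hull of its four corners). *)

theory Defs
  imports "HOL-Analysis.Analysis"
begin

text \<open>Points of the plane are vectors in real^2. A k-gon is a function
  b :: nat => real^2, of which only the values b 0, ..., b (k-1) matter;
  indices are taken modulo k.\<close>

definition cross2 :: "real^2 \<Rightarrow> real^2 \<Rightarrow> real" where
  "cross2 u v = u$1 * v$2 - u$2 * v$1"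

definition convex_polygon_ccw :: "nat \<Rightarrow> (nat \<Rightarrow> real^2) \<Rightarrow> bool" where
  "convex_polygon_ccw k b \<longleftrightarrow>
     inj_on b {..<k} \<and>
     (\<forall>j<k. \<forall>i<k. cross2 (b ((j+1) mod k) - b j) (b i - b j) \<ge> 0) \<and>
     (\<exists>j<k. \<exists>i<k. cross2 (b ((j+1) mod k) - b j) (b i - b j) > 0)"

definition gtm_step :: "real \<Rightarrow> nat \<Rightarrow> (nat \<Rightarrow> real^2) \<Rightarrow> (nat \<Rightarrow> real^2)" where
  "gtm_step \<epsilon> k b = (\<lambda>j. let i = j mod k in
     \<epsilon> *\<^sub>R ((1/2) *\<^sub>R (b ((i + k - 1) mod k) + b ((i + 1) mod k))) + (1 - \<epsilon>) *\<^sub>R b i)"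

end

theory Submission
  imports Defs
begin

text \<open>Extending the vertices periodically to \<int> turns the GtM step into a local smoothing
  operator. Relative to a vertex, every corner of the two quadrilaterals of an edge is then an
  explicit linear combination of the five surrounding edge vectors, and the triangle inequality
  with unit edges bounds its distance by the sum of the absolute coefficients, at most
  1 + \<epsilon>^2/2. The reflection w \<mapsto> 2z + 1 - w commutes with smoothing and swaps the two
  endpoints of the edge, so one estimate covers both; the balls are convex, so they contain
  the quadrilaterals.\<close>

definition periodic_ext :: "nat \<Rightarrow> (nat \<Rightarrow> 'a) \<Rightarrow> int \<Rightarrow> 'a" where
  "periodic_ext k b w = b (nat (w mod int k))"

definition gtm_smooth :: "real \<Rightarrow> (int \<Rightarrow> 'a::real_vector) \<Rightarrow> int \<Rightarrow> 'a" where
  "gtm_smooth \<epsilon> c w = \<epsilon> *\<^sub>R ((1/2) *\<^sub>R (c (w - 1) + c (w + 1))) + (1 - \<epsilon>) *\<^sub>R c w"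

lemma nat_mod_pred:
  assumes "k \<ge> 1"
  shows "(nat (w mod int k) + k - 1) mod k = nat ((w - 1) mod int k)"
proof -
  have "int ((nat (w mod int k) + k - 1) mod k) = ((w mod int k - 1) + int k) mod int k"
    using assms by (simp add: zmod_int of_nat_diff algebra_simps)
  also have "\<dots> = (w - 1) mod int k"
    by (simp add: mod_diff_left_eq)
  finally show ?thesis by (metis nat_int)
qed

lemma nat_mod_succ:
  assumes "k \<ge> 1"
  shows "(nat (w mod int k) + 1) mod k = nat ((w + 1) mod int k)"
proof -
  have "int ((nat (w mod int k) + 1) mod k) = (w mod int k + 1) mod int k"
    using assms by (simp add: zmod_int add.commute)
  also have "\<dots> = (w + 1) mod int k" by (rule mod_add_left_eq)
  finally show ?thesis by (metis nat_int)
qed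

lemma periodic_ext_of_nat: "periodic_ext k b (int j) = b (j mod k)"
  unfolding periodic_ext_def by (simp flip: zmod_int)

lemma periodic_ext_of_nat_succ: "periodic_ext k b (int j + 1) = b ((j + 1) mod k)"
  using periodic_ext_of_nat[of k b "j + 1"] by (simp add: add.commute)

lemma periodic_ext_gtm_step:
  assumes "k \<ge> 1"
  shows "periodic_ext k (gtm_step \<epsilon> k b) = gtm_smooth \<epsilon> (periodic_ext k b)"
proof
  fix w
  have lt: "nat (w mod int k) < k" using assms by (simp add: nat_less_iff)
  show "periodic_ext k (gtm_step \<epsilon> k b) w = gtm_smooth \<epsilon> (periodic_ext k b) w"
    unfolding periodic_ext_def gtm_smooth_def gtm_step_def Let_def mod_less[OF lt]
      nat_mod_pred[OF assms] nat_mod_succ[OF assms] ..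
qed

lemma periodic_ext_edge_le:
  assumes "k \<ge> 1" and "\<forall>j<k. norm (b j - b ((j+1) mod k)) \<le> L"
  shows "norm (periodic_ext k b (w + 1) - periodic_ext k b w) \<le> L"
proof -
  have "nat (w mod int k) < k" using assms(1) by (simp add: nat_less_iff)
  from assms(2)[rule_format, OF this] show ?thesis
    unfolding periodic_ext_def nat_mod_succ[OF assms(1)] by (simp add: norm_minus_commute)
qed

lemma gtm_smooth_reflect:
  "gtm_smooth \<epsilon> (\<lambda>w. c (a - w)) = (\<lambda>w. gtm_smooth \<epsilon> c (a - w))"
proof
  fix w
  have "a - (w - 1) = a - w + 1" "a - (w + 1) = a - w - 1" by simp_all
  then show "gtm_smooth \<epsilon> (\<lambda>w. c (a - w)) w = gtm_smooth \<epsilon> c (a - w)"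
    unfolding gtm_smooth_def by (simp only: add.commute)
qed

lemma norm_lincomb4_le:
  fixes u v w x :: "'a::real_normed_vector"
  assumes "norm u \<le> 1" "norm v \<le> 1" "norm w \<le> 1" "norm x \<le> 1"
  shows "norm (a *\<^sub>R u + b *\<^sub>R v + c *\<^sub>R w + d *\<^sub>R x) \<le> \<bar>a\<bar> + \<bar>b\<bar> + \<bar>c\<bar> + \<bar>d\<bar>"
proof -
  have "norm (a *\<^sub>R u + b *\<^sub>R v + c *\<^sub>R w + d *\<^sub>R x)
      \<le> norm (a *\<^sub>R u) + norm (b *\<^sub>R v) + norm (c *\<^sub>R w) + norm (d *\<^sub>R x)"
    by (smt (verit) norm_triangle_ineq)
  also have "\<dots> \<le> \<bar>a\<bar> + \<bar>b\<bar> + \<bar>c\<bar> + \<bar>d\<bar>"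
    using assms by (simp add: add_mono mult_left_le)
  finally show ?thesis .
qed

lemma gtm_smooth_near_vertex:
  fixes c :: "int \<Rightarrow> 'a::euclidean_space"
  assumes "0 \<le> \<epsilon>" "\<epsilon> < 1/2" and edge: "\<And>w. norm (c (w + 1) - c w) \<le> 1"
  defines "s \<equiv> gtm_smooth \<epsilon> c"
  shows "{c z, c (z + 1), s z, s (z + 1), gtm_smooth \<epsilon> s z, gtm_smooth \<epsilon> s (z + 1)}
           \<subseteq> cball (c z) (1 + \<epsilon>^2/2)"
proof -
  define e where "e i = c (z + i + 1) - c (z + i)" for i
  have e: "norm (e i) \<le> 1" for i
    unfolding e_def using edge[of "z + i"] by simp
  have e_at: "c z - c (z - 1) = e (-1)" "c (z - 1) - c (z - 2) = e (-2)"
    "c (z + 1) - c z = e 0" "c (z + 2) - c (z + 1) = e 1" "c (z + 3) - c (z + 2) = e 2"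
    unfolding e_def by (simp_all add: algebra_simps)
  \<comment> \<open>These identities are checked componentwise, which is why the lemma asks for a Euclidean space.\<close>
  have s0: "s z - c z = (-\<epsilon>/2) *\<^sub>R e (-1) + (\<epsilon>/2) *\<^sub>R e 0 + 0 *\<^sub>R e 1 + 0 *\<^sub>R e 2"
    and s1: "s (z + 1) - c z = 0 *\<^sub>R e (-1) + (1 - \<epsilon>/2) *\<^sub>R e 0 + (\<epsilon>/2) *\<^sub>R e 1 + 0 *\<^sub>R e 2"
    and ss0: "gtm_smooth \<epsilon> s z - c z =
      (-(\<epsilon>^2/4)) *\<^sub>R e (-2) + (-(\<epsilon>^2/4) - \<epsilon>*(1-\<epsilon>)) *\<^sub>R e (-1)
      + (\<epsilon>^2/4 + \<epsilon>*(1-\<epsilon>)) *\<^sub>R e 0 + (\<epsilon>^2/4) *\<^sub>R e 1"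
    and ss1: "gtm_smooth \<epsilon> s (z + 1) - c z =
      (-(\<epsilon>^2/4)) *\<^sub>R e (-1) + (1 - \<epsilon> + 3*\<epsilon>^2/4) *\<^sub>R e 0
      + (\<epsilon> - 3*\<epsilon>^2/4) *\<^sub>R e 1 + (\<epsilon>^2/4) *\<^sub>R e 2"
    unfolding e_at[symmetric] s_def euclidean_eq_iff[where 'a='a]
    by (simp_all add: gtm_smooth_def inner_simps field_simps power2_eq_square)
  have sq: "0 \<le> \<epsilon>^2" "\<epsilon>^2 \<le> \<epsilon>"
    using assms(1,2) by (simp_all add: power2_eq_square mult_left_le_one_le)
  have "norm (s z - c z) \<le> \<bar>-\<epsilon>/2\<bar> + \<bar>\<epsilon>/2\<bar> + \<bar>0\<bar> + \<bar>0\<bar>"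
    unfolding s0 by (rule norm_lincomb4_le[OF e e e e])
  also have "\<dots> = \<epsilon>" using assms(1) by simp
  also have "\<dots> \<le> 1 + \<epsilon>^2/2" using sq assms(2) by linarith
  finally have d0: "norm (s z - c z) \<le> 1 + \<epsilon>^2/2" .
  have "norm (s (z + 1) - c z) \<le> \<bar>0\<bar> + \<bar>1 - \<epsilon>/2\<bar> + \<bar>\<epsilon>/2\<bar> + \<bar>0\<bar>"
    unfolding s1 by (rule norm_lincomb4_le[OF e e e e])
  also have "\<dots> \<le> 1 + \<epsilon>^2/2" using sq assms(1,2) by simp
  finally have d1: "norm (s (z + 1) - c z) \<le> 1 + \<epsilon>^2/2" .
  have "norm (gtm_smooth \<epsilon> s z - c z) \<le>
      \<bar>-(\<epsilon>^2/4)\<bar> + \<bar>-(\<epsilon>^2/4) - \<epsilon>*(1-\<epsilon>)\<bar> + \<bar>\<epsilon>^2/4 + \<epsilon>*(1-\<epsilon>)\<bar> + \<bar>\<epsilon>^2/4\<bar>"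
    unfolding ss0 by (rule norm_lincomb4_le[OF e e e e])
  also have "\<dots> = 2*\<epsilon> - \<epsilon>^2"
    using sq assms(1,2) by (simp add: power2_eq_square algebra_simps)
  also have "\<dots> \<le> 1 + \<epsilon>^2/2" using sq assms(2) by linarith
  finally have dd0: "norm (gtm_smooth \<epsilon> s z - c z) \<le> 1 + \<epsilon>^2/2" .
  have "norm (gtm_smooth \<epsilon> s (z + 1) - c z) \<le>
      \<bar>-(\<epsilon>^2/4)\<bar> + \<bar>1 - \<epsilon> + 3*\<epsilon>^2/4\<bar> + \<bar>\<epsilon> - 3*\<epsilon>^2/4\<bar> + \<bar>\<epsilon>^2/4\<bar>"
    unfolding ss1 by (rule norm_lincomb4_le[OF e e e e])
  also have "\<dots> = 1 + \<epsilon>^2/2"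
    using sq assms(1,2) by simp
  finally have dd1: "norm (gtm_smooth \<epsilon> s (z + 1) - c z) \<le> 1 + \<epsilon>^2/2" .
  have "norm (c (z + 1) - c z) \<le> 1 + \<epsilon>^2/2"
    using e[of 0] sq(1) unfolding e_at by linarith
  with d0 d1 dd0 dd1 show ?thesis
    by (auto simp: mem_cball dist_norm norm_minus_commute)
qed

lemma gtm_smooth_near_edge:
  fixes c :: "int \<Rightarrow> 'a::euclidean_space"
  assumes "0 \<le> \<epsilon>" "\<epsilon> < 1/2" and edge: "\<And>w. norm (c (w + 1) - c w) \<le> 1"
  defines "s \<equiv> gtm_smooth \<epsilon> c"
  shows "{c z, c (z + 1), s z, s (z + 1), gtm_smooth \<epsilon> s z, gtm_smooth \<epsilon> s (z + 1)}
           \<subseteq> cball (c z) (1 + \<epsilon>^2/2) \<inter> cball (c (z + 1)) (1 + \<epsilon>^2/2)"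
proof -
  define r where "r = (\<lambda>w. c (2*z + 1 - w))"
  have r_edge: "norm (r (w + 1) - r w) \<le> 1" for w
    using edge[of "2*z - w"] by (simp add: r_def norm_minus_commute algebra_simps)
  have "{c z, c (z + 1), s z, s (z + 1), gtm_smooth \<epsilon> s z, gtm_smooth \<epsilon> s (z + 1)}
          \<subseteq> cball (c (z + 1)) (1 + \<epsilon>^2/2)"
    using gtm_smooth_near_vertex[of \<epsilon> r z, OF assms(1,2) r_edge]
    unfolding r_def gtm_smooth_reflect s_def by (simp add: insert_commute)
  with gtm_smooth_near_vertex[of \<epsilon> c z, OF assms(1,2) edge] show ?thesis
    unfolding s_def by blast
qed

theorem mainTheorem9:
  fixes k :: nat and \<epsilon> :: real and b :: "nat \<Rightarrow> real^2"
  assumes "k \<ge> 3"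
    and "0 \<le> \<epsilon>" and "\<epsilon> < 1/2"
    and "convex_polygon_ccw k b"
    and "\<forall>j<k. norm (b j - b ((j+1) mod k)) \<le> 1"
  shows "\<forall>j<k. \<forall>p.
     (let b1 = gtm_step \<epsilon> k b; b2 = gtm_step \<epsilon> k b1 in
       p \<in> convex hull {b j, b ((j+1) mod k), b1 ((j+1) mod k), b1 j} \<or>
       p \<in> convex hull {b1 j, b1 ((j+1) mod k), b2 ((j+1) mod k), b2 j})
     \<longrightarrow> norm (p - b j) \<le> 1 + \<epsilon>^2/2 \<and> norm (p - b ((j+1) mod k)) \<le> 1 + \<epsilon>^2/2"
proof (intro allI impI)
  fix j p
  assume "j < k"
  let ?b1 = "gtm_step \<epsilon> k b" and ?M = "1 + \<epsilon>^2/2"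
  let ?P = "{b j, b ((j+1) mod k), ?b1 j, ?b1 ((j+1) mod k),
             gtm_step \<epsilon> k ?b1 j, gtm_step \<epsilon> k ?b1 ((j+1) mod k)}"
  have "k \<ge> 1" using assms(1) by simp
  have "?P \<subseteq> cball (b j) ?M \<inter> cball (b ((j+1) mod k)) ?M"
    using gtm_smooth_near_edge[of \<epsilon> "periodic_ext k b" "int j",
        OF assms(2,3) periodic_ext_edge_le[OF \<open>k \<ge> 1\<close> assms(5)]]
    unfolding periodic_ext_gtm_step[OF \<open>k \<ge> 1\<close>, symmetric]
      periodic_ext_of_nat periodic_ext_of_nat_succ mod_less[OF \<open>j < k\<close>] .
  then have "convex hull ?P \<subseteq> cball (b j) ?M \<inter> cball (b ((j+1) mod k)) ?M"
    by (simp add: hull_minimal convex_Int)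
  moreover assume "let b1 = ?b1; b2 = gtm_step \<epsilon> k b1 in
       p \<in> convex hull {b j, b ((j+1) mod k), b1 ((j+1) mod k), b1 j} \<or>
       p \<in> convex hull {b1 j, b1 ((j+1) mod k), b2 ((j+1) mod k), b2 j}"
  then have "p \<in> convex hull ?P"
    unfolding Let_def by (auto elim!: rev_subsetD[OF _ hull_mono])
  ultimately show "norm (p - b j) \<le> ?M \<and> norm (p - b ((j+1) mod k)) \<le> ?M"
    by (auto simp: dist_norm norm_minus_commute)
qed

end
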